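(* Let $g(x)=1-2e^{-x}+\frac{1-e^{-x}}{x}$. For all $0<p<1$ and $s\in\mathbb{Z}^+$, \[ g(sp)\leqslant h^0_{\{1,2\}}(s,p)\leqslant g(sp)+\left(1+\frac{1}{\sqrt e}\right)\frac{p}{1-p}, \] and \[ h^0_{J_{sym}}(s,p)\leqslant\frac12\left(g(sp)+e^{-2sp}g(-sp)\right)+\frac12\left(1+\frac{2}{e^{3/4}}\right)\frac{p}{1-p}+\frac{4e^{3/2}-1}{6e^3}\,\frac{p^2}{(1-p^2)^2}. \]
   Context: $\mathbb{Z}^+$ is the set of positive integers and $J_{sym}=\{2\}\cup\{2m+1:m\geqslant0\}$. For $J\subset\mathbb{Z}^+$, integer $s\geqslant1$ and $0<p<1$, \[ h_J^0(s,p)=\frac{(1-p)^s}{p^2}\left(\frac{p^2}{(1-p)^{s+1}}+\frac{p}{s}\frac{1}{(1-p)^s}-\sum_{k\in J}k\frac{(k+s-2)!}{(k-1)!\,s!}p^k\right). \] In particular $h^0_{\{1,2\}}(s,p)=\frac{1}{1-p}-2(1-p)^s+\frac{1-(1-p)^s}{ps}$ and $h^0_{J_{sym}}(s,p)=\frac12\left(h^0_{\{1,2\}}(s,p)+\frac{(1-p)^s}{(1+p)^s}h^0_{\{1,2\}}(s,-p)\right)$, where $h^0_{\{1,2\}}(s,-p)$ denotes the closed-form expression evaluated at $-p$. *)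

theory Defs
  imports "HOL-Analysis.Analysis"
begin

definition J_sym :: "nat set" where
  "J_sym = {2} \<union> {2*m+1 | m. True}"

definition h0 :: "nat set \<Rightarrow> nat \<Rightarrow> real \<Rightarrow> real" where
  "h0 J s p = (1 - p) ^ s / p\<^sup>2 *
     (p\<^sup>2 / (1 - p) ^ (s + 1) + p / real s * (1 / (1 - p) ^ s)
      - (\<Sum>\<^sub>\<infinity>k\<in>J. real k * fact (k + s - 2) / (fact (k - 1) * fact s) * p ^ k))"

definition g_fun :: "real \<Rightarrow> real" where
  "g_fun x = 1 - 2 * exp (- x) + (1 - exp (- x)) / x"

end

(*
  The coefficients k (k+s-2)! / ((k-1)! s!) of h0 are those of the power series
  x/s (1-x)^(-s) + x^2 (1-x)^(-s-1), a combination of two negative binomial series.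
  Hence h0 on {1,2} has the elementary closed form h12, and h0 on J_sym, whose odd
  part is half the difference of this series at p and at -p, is the average of h12
  at p and of ((1-p)/(1+p))^s times h12 at -p.  Comparing with g then comes down to
  comparing (1-p)^s with exp(-sp) and ((1-p)/(1+p))^s with exp(-2sp): the bounds
  ln y >= (y - 1/y)/2 and 2p <= ln((1+p)/(1-p)) <= 2p + 2p^3/(3(1-p^2)) control these
  to second order, and the remaining factors (x + c) exp(-x) and (1-x) x are bounded
  by their maxima.
*)
theory Submission
  imports Defs
begin

lemma negative_binomial_sums:
  fixes x :: real
  assumes "\<bar>x\<bar> < 1"
  shows "(\<lambda>j. real ((j + m) choose j) * x ^ j) sums (1 / (1 - x) ^ (m + 1))"
proof -
  have "(\<lambda>j. ((- real (m + 1)) gchoose j) * (- x) ^ j) sums (1 + (- x)) powr (- real (m + 1))"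
    by (rule gen_binomial_real) (use assms in auto)
  moreover have "((- real (m + 1)) gchoose j) * (- x) ^ j = real ((j + m) choose j) * x ^ j" for j
  proof -
    have "(- real (m + 1)) gchoose j = (- 1) ^ j * (real (j + m) gchoose j)"
      by (subst gbinomial_minus) (simp add: algebra_simps)
    then show ?thesis
      by (simp add: binomial_gbinomial power_mult_distrib[symmetric])
  qed
  moreover have "(1 + (- x)) powr (- real (m + 1)) = 1 / (1 - x) ^ (m + 1)"
    using assms by (simp only: powr_minus powr_realpow) (simp_all add: divide_inverse)
  ultimately show ?thesis
    by simp
qed

definition h0_coeff :: "nat \<Rightarrow> nat \<Rightarrow> real" where
  "h0_coeff s k = real k * fact (k + s - 2) / (fact (k - 1) * fact s)"

lemma h0_altdef:
  "h0 J s p = (1 - p) ^ s / p\<^sup>2 *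
     (p\<^sup>2 / (1 - p) ^ (s + 1) + p / real s * (1 / (1 - p) ^ s) - (\<Sum>\<^sub>\<infinity>k\<in>J. h0_coeff s k * p ^ k))"
  unfolding h0_def h0_coeff_def ..

lemma h0_coeff_Suc:
  assumes "s \<ge> 1"
  shows "h0_coeff s (Suc j) = real (Suc j) / real s * real ((j + s - 1) choose j)"
proof -
  obtain t where s: "s = Suc t"
    using assms by (cases s) auto
  have "real ((j + t) choose j) = fact (j + t) / (fact j * fact t)"
    by (simp add: binomial_fact)
  moreover have "(fact (Suc t) :: real) = real (Suc t) * fact t"
    by simp
  ultimately show ?thesis
    unfolding h0_coeff_def s by (simp del: fact_Suc of_nat_Suc)
qed

lemma h0_coeff_Suc_eq_binomial_diff:
  assumes "s \<ge> 1"
  shows "h0_coeff s (Suc j)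
    = real ((j + s) choose j) - (real s - 1) / real s * real ((j + (s - 1)) choose j)"
proof -
  have "real s * real ((j + s) choose j) = real (j + s) * real ((j + s - 1) choose j)"
    using binomial_absorb_comp[of "j + s" j] by (metis add_diff_cancel_left' of_nat_mult)
  then show ?thesis
    using assms by (simp add: h0_coeff_Suc field_simps)
qed

lemma h0_coeff_sums:
  fixes x :: real
  assumes "\<bar>x\<bar> < 1" "s \<ge> 1"
  shows "(\<lambda>k. h0_coeff s k * x ^ k) sums (x / real s * (1 / (1 - x) ^ s) + x\<^sup>2 / (1 - x) ^ (s + 1))"
proof -
  have "(\<lambda>j. x * (real ((j + s) choose j) * x ^ j)
          - x * ((real s - 1) / real s) * (real ((j + (s - 1)) choose j) * x ^ j))
        sums (x * (1 / (1 - x) ^ (s + 1)) - x * ((real s - 1) / real s) * (1 / (1 - x) ^ (s - 1 + 1)))"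
    by (intro sums_diff sums_mult negative_binomial_sums assms)
  moreover have "x * (1 / (1 - x) ^ (s + 1)) - x * ((real s - 1) / real s) * (1 / (1 - x) ^ (s - 1 + 1))
      = x / real s * (1 / (1 - x) ^ s) + x\<^sup>2 / (1 - x) ^ (s + 1)"
    using assms by (simp add: field_simps power2_eq_square)
  ultimately have "(\<lambda>j. h0_coeff s (Suc j) * x ^ Suc j)
      sums (x / real s * (1 / (1 - x) ^ s) + x\<^sup>2 / (1 - x) ^ (s + 1))"
    by (simp add: h0_coeff_Suc_eq_binomial_diff[OF assms(2)] algebra_simps)
  then show ?thesis
    using sums_Suc_iff[of "\<lambda>k. h0_coeff s k * x ^ k"] by (simp add: h0_coeff_def)
qed

lemma has_sum_odd_terms:
  fixes c :: "nat \<Rightarrow> real"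
  assumes "(\<lambda>k. c k * x ^ k) sums S" "(\<lambda>k. c k * (- x) ^ k) sums T"
    and "\<And>k. c k \<ge> 0" "x \<ge> 0"
  shows "((\<lambda>k. c k * x ^ k) has_sum ((S - T) / 2)) {k. odd k}"
proof -
  define f where "f k = (c k * x ^ k - c k * (- x) ^ k) / 2" for k
  have f_odd: "f k = (if odd k then c k * x ^ k else 0)" for k
    by (simp add: f_def power_minus_odd)
  moreover have "f sums ((S - T) / 2)"
    unfolding f_def by (intro sums_divide sums_diff assms)
  ultimately have "(f has_sum ((S - T) / 2)) UNIV"
    using assms(3,4) by (intro sums_nonneg_imp_has_sum) auto
  then show ?thesis
    by (rule has_sum_cong_neutral[THEN iffD1, rotated -1]) (auto simp: f_odd)
qed

definition h12 :: "nat \<Rightarrow> real \<Rightarrow> real" where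
  "h12 s p = 1 / (1 - p) - 2 * (1 - p) ^ s + (1 - (1 - p) ^ s) / (p * real s)"

lemma h0_12_eq_h12:
  assumes "0 < p" "p < 1" "s \<ge> 1"
  shows "h0 {1, 2} s p = h12 s p"
proof -
  have "h0_coeff s 1 = 1 / real s" "h0_coeff s 2 = 2"
    using h0_coeff_Suc[OF assms(3), of 0] by (simp_all add: h0_coeff_def)
  then have "h0 {1, 2} s p = (1 - p) ^ s / p\<^sup>2 *
     (p\<^sup>2 / ((1 - p) * (1 - p) ^ s) + p / real s * (1 / (1 - p) ^ s) - (p / real s + 2 * p\<^sup>2))"
    by (simp add: h0_altdef power2_eq_square)
  also have "\<dots> = h12 s p"
  proof -
    have "A / p\<^sup>2 * (p\<^sup>2 / ((1 - p) * A) + p / real s * (1 / A) - (p / real s + 2 * p\<^sup>2))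
        = 1 / (1 - p) - 2 * A + (1 - A) / (p * real s)" if "A > 0" for A
      using that assms by (simp add: field_simps power2_eq_square)
    then show ?thesis
      using assms unfolding h12_def by simp
  qed
  finally show ?thesis .
qed

lemma h0_J_sym_eq_h12:
  assumes "0 < p" "p < 1" "s \<ge> 1"
  shows "h0 J_sym s p = (h12 s p + ((1 - p) / (1 + p)) ^ s * h12 s (- p)) / 2"
proof -
  define F where "F x = x / real s * (1 / (1 - x) ^ s) + x\<^sup>2 / (1 - x) ^ (s + 1)" for x :: real
  have "((\<lambda>k. h0_coeff s k * p ^ k) has_sum ((F p - F (- p)) / 2)) {k. odd k}"
    unfolding F_def using assms
    by (intro has_sum_odd_terms h0_coeff_sums) (auto simp: h0_coeff_def)
  then have "((\<lambda>k. h0_coeff s k * p ^ k) has_sum (h0_coeff s 2 * p ^ 2 + (F p - F (- p)) / 2))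
      (insert 2 {k. odd k})"
    by (intro has_sum_insert) auto
  moreover have "J_sym = insert 2 {k. odd k}"
    unfolding J_sym_def by (auto elim: oddE)
  moreover have "h0_coeff s 2 = 2"
    by (simp add: h0_coeff_def)
  ultimately have "h0 J_sym s p = (1 - p) ^ s / p\<^sup>2 *
     (p\<^sup>2 / ((1 - p) * (1 - p) ^ s) + p / real s * (1 / (1 - p) ^ s) - (2 * p\<^sup>2 + (F p - F (- p)) / 2))"
    by (simp add: h0_altdef infsumI)
  also have "\<dots> = (h12 s p + ((1 - p) / (1 + p)) ^ s * h12 s (- p)) / 2"
  proof -
    have "A / p\<^sup>2 * (p\<^sup>2 / (u * A) + p / real s * (1 / A)
          - (2 * p\<^sup>2 + (p / real s * (1 / A) + p\<^sup>2 / (u * A)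
                        - (- p / real s * (1 / B) + (- p)\<^sup>2 / (v * B))) / 2))
        = ((1 / u - 2 * A + (1 - A) / (p * real s))
           + A / B * (1 / v - 2 * B + (1 - B) / (- p * real s))) / 2"
      if "A > 0" "B > 0" "u \<noteq> 0" "v \<noteq> 0" for A B u v
      using that assms by (simp add: field_simps power2_eq_square)
    from this[of "(1 - p) ^ s" "(1 + p) ^ s" "1 - p" "1 + p"] show ?thesis
      using assms unfolding h12_def F_def by (simp add: power_divide)
  qed
  finally show ?thesis .
qed

lemma ln_ge_half_sub_inverse:
  fixes y :: real
  assumes "0 < y" "y \<le> 1"
  shows "(y - 1 / y) / 2 \<le> ln y"
proof -
  define f where "f t = (t - 1 / t) / 2 - ln t" for t :: real
  have "f y \<le> f 1"
  proof (rule DERIV_nonneg_imp_increasing_open[OF assms(2)])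
    fix t :: real
    assume "y < t" "t < 1"
    then have "t > 0"
      using assms by simp
    then have "(f has_real_derivative (1 + 1 / t\<^sup>2) / 2 - 1 / t) (at t)"
      unfolding f_def by (auto intro!: derivative_eq_intros simp: power2_eq_square)
    moreover have "(1 + 1 / t\<^sup>2) / 2 - 1 / t = (1 / t - 1)\<^sup>2 / 2"
      using \<open>t > 0\<close> by (simp add: field_simps power2_eq_square)
    ultimately show "\<exists>d. (f has_real_derivative d) (at t) \<and> 0 \<le> d"
      by fastforce
  next
    show "continuous_on {y..1} f"
      unfolding f_def using assms by (intro continuous_intros) auto
  qed
  then show ?thesis
    by (simp add: f_def)
qed

lemma ln_one_plus_sub_ln_one_minus_lower_bound:
  fixes p :: real
  assumes "0 \<le> p" "p < 1"
  shows "2 * p \<le> ln (1 + p) - ln (1 - p)"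
proof -
  define f where "f t = ln (1 + t) - ln (1 - t) - 2 * t" for t :: real
  have "f 0 \<le> f p"
  proof (rule DERIV_nonneg_imp_increasing_open[OF assms(1)])
    fix t :: real
    assume "0 < t" "t < p"
    then have t: "0 < t" "t < 1"
      using assms by simp_all
    then have "(f has_real_derivative 1 / (1 + t) + 1 / (1 - t) - 2) (at t)"
      unfolding f_def by (auto intro!: derivative_eq_intros)
    moreover have "1 / (1 + t) + 1 / (1 - t) - 2 = 2 * t\<^sup>2 / ((1 + t) * (1 - t))"
      using t by (simp add: divide_simps power2_eq_square) (simp add: algebra_simps)
    ultimately show "\<exists>d. (f has_real_derivative d) (at t) \<and> 0 \<le> d"
      using t by fastforce
  next
    show "continuous_on {0..p} f"
      unfolding f_def using assms by (intro continuous_intros) auto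
  qed
  then show ?thesis
    by (simp add: f_def)
qed

lemma ln_one_plus_sub_ln_one_minus_upper_bound:
  fixes p :: real
  assumes "0 \<le> p" "p < 1"
  shows "ln (1 + p) - ln (1 - p) \<le> 2 * p + 2 / 3 * p ^ 3 / (1 - p\<^sup>2)"
proof -
  define f where "f t = 2 / 3 * t ^ 3 - (1 - t\<^sup>2) * (ln (1 + t) - ln (1 - t) - 2 * t)" for t :: real
  have "f 0 \<le> f p"
  proof (rule DERIV_nonneg_imp_increasing_open[OF assms(1)])
    fix t :: real
    assume "0 < t" "t < p"
    then have t: "0 < t" "t < 1"
      using assms by simp_all
    have "(1 - t\<^sup>2) * (1 / (1 + t) + 1 / (1 - t) - 2)
        = (1 - t) * ((1 + t) / (1 + t)) + (1 + t) * ((1 - t) / (1 - t)) - 2 * (1 - t\<^sup>2)"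
      by (simp add: field_simps power2_eq_square)
    also have "\<dots> = 2 * t\<^sup>2"
      using t by (simp add: power2_eq_square algebra_simps)
    finally have "(f has_real_derivative 2 * t * (ln (1 + t) - ln (1 - t) - 2 * t)) (at t)"
      unfolding f_def using t by (auto intro!: derivative_eq_intros simp: algebra_simps)
    moreover have "0 \<le> 2 * t * (ln (1 + t) - ln (1 - t) - 2 * t)"
      using ln_one_plus_sub_ln_one_minus_lower_bound[of t] t by simp
    ultimately show "\<exists>d. (f has_real_derivative d) (at t) \<and> 0 \<le> d"
      by blast
  next
    show "continuous_on {0..p} f"
      unfolding f_def using assms by (intro continuous_intros) auto
  qed
  then have "(ln (1 + p) - ln (1 - p) - 2 * p) * (1 - p\<^sup>2) \<le> 2 / 3 * p ^ 3"
    by (simp add: f_def mult.commute)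
  moreover have "1 - p\<^sup>2 > 0"
    using assms by (simp add: power_less_one_iff abs_less_iff)
  ultimately have "ln (1 + p) - ln (1 - p) - 2 * p \<le> 2 / 3 * p ^ 3 / (1 - p\<^sup>2)"
    by (simp only: pos_le_divide_eq)
  then show ?thesis
    by linarith
qed

lemma one_minus_pow_le_exp:
  fixes p :: real
  assumes "p \<le> 1"
  shows "(1 - p) ^ s \<le> exp (- (real s * p))"
proof -
  have "(1 - p) ^ s \<le> exp (- p) ^ s"
    using assms exp_ge_add_one_self[of "- p"] by (intro power_mono) auto
  then show ?thesis
    by (simp add: exp_of_nat_mult[symmetric])
qed

lemma exp_sub_one_minus_pow_le:
  fixes p :: real
  assumes "0 \<le> p" "p < 1"
  shows "exp (- (real s * p)) - (1 - p) ^ s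
    \<le> exp (- (real s * p)) * (real s * p * (p / (1 - p)) / 2)"
proof -
  define x where "x = real s * p"
  define P where "P = p / (1 - p)"
  have "((1 - p) - 1 / (1 - p)) / 2 \<le> ln (1 - p)"
    using assms by (intro ln_ge_half_sub_inverse) auto
  moreover have "((1 - p) - 1 / (1 - p)) / 2 = - p - p * P / 2"
    using assms unfolding P_def by (simp add: divide_simps) (simp add: algebra_simps)
  ultimately have "real s * (- p - p * P / 2) \<le> real s * ln (1 - p)"
    by (intro mult_left_mono) simp_all
  then have "- x - x * P / 2 \<le> real s * ln (1 - p)"
    by (simp add: x_def algebra_simps)
  then have "exp (- x - x * P / 2) \<le> exp (real s * ln (1 - p))"
    by simp
  also have "\<dots> = (1 - p) ^ s"
    using assms by (simp add: exp_of_nat_mult)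
  finally have "exp (- x) * exp (- (x * P / 2)) \<le> (1 - p) ^ s"
    by (simp add: mult_exp_exp)
  moreover have "exp (- x) * (1 - x * P / 2) \<le> exp (- x) * exp (- (x * P / 2))"
    using exp_ge_add_one_self[of "- (x * P / 2)"] by simp
  ultimately show ?thesis
    unfolding x_def P_def by (simp add: algebra_simps)
qed

lemma one_minus_div_one_plus_pow_eq_exp:
  fixes p :: real
  assumes "0 \<le> p" "p < 1"
  shows "((1 - p) / (1 + p)) ^ s = exp (real s * (ln (1 - p) - ln (1 + p)))"
proof -
  have "exp (ln (1 - p) - ln (1 + p)) = (1 - p) / (1 + p)"
    using assms by (simp add: exp_diff)
  then show ?thesis
    by (metis exp_of_nat_mult)
qed

lemma one_minus_div_one_plus_pow_le_exp:
  fixes p :: real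
  assumes "0 \<le> p" "p < 1"
  shows "((1 - p) / (1 + p)) ^ s \<le> exp (- 2 * real s * p)"
proof -
  have "real s * (2 * p) \<le> real s * (ln (1 + p) - ln (1 - p))"
    using assms by (intro mult_left_mono ln_one_plus_sub_ln_one_minus_lower_bound) auto
  then show ?thesis
    using assms by (simp add: one_minus_div_one_plus_pow_eq_exp algebra_simps)
qed

lemma exp_sub_one_minus_div_one_plus_pow_le:
  fixes p :: real
  assumes "0 \<le> p" "p < 1"
  shows "exp (- 2 * real s * p) - ((1 - p) / (1 + p)) ^ s
    \<le> exp (- 2 * real s * p) * (2 / 3 * real s * p ^ 3 / (1 - p\<^sup>2))"
proof -
  define K where "K = 2 / 3 * real s * p ^ 3 / (1 - p\<^sup>2)"
  have "real s * (ln (1 + p) - ln (1 - p)) \<le> real s * (2 * p + 2 / 3 * p ^ 3 / (1 - p\<^sup>2))"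
    using assms by (intro mult_left_mono ln_one_plus_sub_ln_one_minus_upper_bound) auto
  then have "- 2 * real s * p - K \<le> real s * (ln (1 - p) - ln (1 + p))"
    by (simp add: K_def algebra_simps)
  then have "exp (- 2 * real s * p - K) \<le> ((1 - p) / (1 + p)) ^ s"
    using assms by (simp add: one_minus_div_one_plus_pow_eq_exp)
  then have "exp (- 2 * real s * p) * exp (- K) \<le> ((1 - p) / (1 + p)) ^ s"
    by (simp add: mult_exp_exp)
  moreover have "exp (- 2 * real s * p) * (1 - K) \<le> exp (- 2 * real s * p) * exp (- K)"
    using exp_ge_add_one_self[of "- K"] by simp
  ultimately show ?thesis
    by (simp add: K_def algebra_simps)
qed

lemma exp_neg_mult_add_le:
  fixes x c :: real
  shows "exp (- x) * (x + c) \<le> exp (c - 1)"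
proof -
  have "exp (- x) * (x + c) \<le> exp (- x) * exp (x + c - 1)"
    using exp_ge_add_one_self[of "x + c - 1"] by simp
  then show ?thesis
    by (simp add: mult_exp_exp)
qed

lemma h12_sub_g_fun:
  fixes p :: real
  assumes "0 < p" "p < 1" "s \<ge> 1"
  shows "h12 s p - g_fun (real s * p)
    = p / (1 - p) + (exp (- (real s * p)) - (1 - p) ^ s) * (2 + 1 / (real s * p))"
proof -
  have "1 / (1 - p) - 2 * A + (1 - A) / (p * real s) - (1 - 2 * b + (1 - b) / (real s * p))
      = p / (1 - p) + (b - A) * (2 + 1 / (real s * p))" for A b
  proof -
    have "1 / (1 - p) = 1 + p / (1 - p)"
      using assms by (simp add: field_simps)
    then show ?thesis
      by (simp add: mult.commute[of "real s"] diff_divide_distrib algebra_simps)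
  qed
  then show ?thesis
    unfolding h12_def g_fun_def .
qed

lemma g_fun_le_h12:
  fixes p :: real
  assumes "0 < p" "p < 1" "s \<ge> 1"
  shows "g_fun (real s * p) \<le> h12 s p"
proof -
  have "0 \<le> exp (- (real s * p)) - (1 - p) ^ s"
    using assms one_minus_pow_le_exp[of p s] by simp
  moreover have "0 \<le> 2 + 1 / (real s * p)"
    using assms by (simp add: add_nonneg_nonneg)
  ultimately have "0 \<le> (exp (- (real s * p)) - (1 - p) ^ s) * (2 + 1 / (real s * p))"
    by (rule mult_nonneg_nonneg)
  moreover have "0 \<le> p / (1 - p)"
    using assms by simp
  ultimately show ?thesis
    using h12_sub_g_fun[OF assms] by linarith
qed

lemma inverse_sqrt_exp_1: "1 / sqrt (exp 1) = exp (- (1 / 2) :: real)"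
proof -
  have "sqrt (exp 1) = exp (1 / 2 :: real)"
    by (rule real_sqrt_unique) (simp_all add: power2_eq_square mult_exp_exp)
  then show ?thesis
    by (simp add: exp_minus inverse_eq_divide)
qed

lemma h12_le_g_fun_add:
  fixes p :: real
  assumes "0 < p" "p < 1" "s \<ge> 1"
  shows "h12 s p \<le> g_fun (real s * p) + (1 + 1 / sqrt (exp 1)) * (p / (1 - p))"
proof -
  define x where "x = real s * p"
  define P where "P = p / (1 - p)"
  have "x > 0" "P > 0"
    using assms by (simp_all add: x_def P_def)
  have "(exp (- x) - (1 - p) ^ s) * (2 + 1 / x) \<le> exp (- x) * (x * P / 2) * (2 + 1 / x)"
    using assms \<open>x > 0\<close> exp_sub_one_minus_pow_le[of p s]
    by (intro mult_right_mono) (simp_all add: x_def P_def)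
  also have "\<dots> = exp (- x) * (x + 1 / 2) * P"
    using \<open>x > 0\<close> by (simp add: field_simps)
  also have "\<dots> \<le> exp (- (1 / 2)) * P"
    using exp_neg_mult_add_le[of x "1 / 2"] \<open>P > 0\<close> by (intro mult_right_mono) simp_all
  finally show ?thesis
    using h12_sub_g_fun[OF assms] by (simp add: inverse_sqrt_exp_1 x_def P_def algebra_simps)
qed

lemma h12_sym_sub_g_fun_sym:
  fixes p :: real
  assumes "0 < p" "p < 1" "s \<ge> 1"
  defines "x \<equiv> real s * p" and "r \<equiv> ((1 - p) / (1 + p)) ^ s"
  shows "(h12 s p + r * h12 s (- p)) / 2 - (g_fun x + exp (- 2 * x) * g_fun (- x)) / 2
    = (p / (1 - p) - r * (p / (1 + p)) + 4 * (exp (- x) - (1 - p) ^ s)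
       + (exp (- 2 * x) - r) * (1 / x - 1)) / 2"
proof -
  have identity:
    "(1 / u - 2 * A + (1 - A) / y + A / B * (1 / v - 2 * B + (1 - B) / (- y))) / 2
       - (1 - 2 * b + (1 - b) / y + b\<^sup>2 * (1 - 2 / b + (1 - 1 / b) / (- y))) / 2
     = ((1 / u - 1) + A / B * (1 / v - 1) + 4 * (b - A) + (b\<^sup>2 - A / B) * (1 / y - 1)) / 2"
    if "B \<noteq> 0" "b \<noteq> 0" "y \<noteq> 0" for A B b u v y :: real
    using that by (simp add: field_simps power2_eq_square)
  have "x \<noteq> 0" "(1 + p) ^ s \<noteq> 0" "1 / (1 - p) - 1 = p / (1 - p)" "1 / (1 + p) - 1 = - (p / (1 + p))"
    using assms by (simp_all add: x_def field_simps)
  moreover have "exp (- 2 * x) = (exp (- x))\<^sup>2" "exp x = 1 / exp (- x)"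
    by (simp_all add: power2_eq_square mult_exp_exp exp_minus inverse_eq_divide)
  moreover have "h12 s p = 1 / (1 - p) - 2 * (1 - p) ^ s + (1 - (1 - p) ^ s) / x"
    "h12 s (- p) = 1 / (1 + p) - 2 * (1 + p) ^ s + (1 - (1 + p) ^ s) / (- x)"
    by (simp_all add: h12_def x_def mult.commute)
  ultimately show ?thesis
    using identity[of "(1 + p) ^ s" "exp (- x)" x "1 - p" "(1 - p) ^ s" "1 + p"]
    by (simp add: g_fun_def r_def power_divide)
qed

lemma cubic_correction_mult_eq:
  fixes p :: real
  assumes "0 < p" "p < 1" "s \<ge> 1"
  shows "2 / 3 * real s * p ^ 3 / (1 - p\<^sup>2) * (1 / (real s * p) - 1)
    = 2 / 3 * (1 - real s * p) * (p / (1 + p)) * (p / (1 - p))"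
proof -
  have "1 - p\<^sup>2 > 0"
    using assms by (simp add: power_less_one_iff abs_less_iff)
  have "real s * p ^ 3 * (1 / (real s * p) - 1) = p\<^sup>2 * (1 - real s * p)"
    using assms by (simp add: field_simps power2_eq_square power3_eq_cube)
  moreover have "p\<^sup>2 / (1 - p\<^sup>2) = p / (1 + p) * (p / (1 - p))"
    using assms \<open>1 - p\<^sup>2 > 0\<close> by (simp add: field_simps power2_eq_square)
  moreover have "2 / 3 * b * c / d * e = 2 / 3 * (b * c * e) / d"
    and "2 / 3 * (c * y) / d = 2 / 3 * y * (c / d)" for b c d e y :: real
    by simp_all
  ultimately show ?thesis
    by (metis mult.assoc)
qed

lemma cubic_correction_mult_le:
  fixes p :: real
  assumes "0 < p" "p < 1" "s \<ge> 1" "real s * p \<le> 1"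
  shows "2 / 3 * real s * p ^ 3 / (1 - p\<^sup>2) * (1 / (real s * p) - 1) \<le> p / (1 - p) / 6"
proof -
  define x where "x = real s * p"
  define P where "P = p / (1 - p)"
  have "P > 0" "x \<le> 1"
    using assms by (simp_all add: x_def P_def)
  have "p / (1 + p) \<le> p / 1"
    using assms by (intro divide_left_mono) auto
  also have "\<dots> \<le> x"
    using assms mult_right_mono[of 1 "real s" p] by (simp add: x_def)
  finally have "2 / 3 * (1 - x) * (p / (1 + p)) * P \<le> 2 / 3 * P * ((1 - x) * x)"
    using \<open>x \<le> 1\<close> \<open>P > 0\<close> mult_left_mono[of "p / (1 + p)" x "2 / 3 * (1 - x) * P"]
    by (simp add: algebra_simps)
  also have "\<dots> \<le> 2 / 3 * P * (1 / 4)"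
    using zero_le_power2[of "x - 1 / 2"] \<open>P > 0\<close>
    by (intro mult_left_mono) (simp_all add: power2_eq_square algebra_simps)
  also have "\<dots> = P / 6"
    by simp
  finally show ?thesis
    using cubic_correction_mult_eq[OF assms(1-3)] by (simp only: x_def P_def)
qed

lemma exp_sub_one_minus_div_one_plus_pow_mult_le:
  fixes p :: real
  assumes "0 < p" "p < 1" "s \<ge> 1"
  shows "(exp (- 2 * real s * p) - ((1 - p) / (1 + p)) ^ s) * (1 / (real s * p) - 1)
    \<le> p / (1 - p) / 6"
proof (cases "real s * p \<le> 1")
  case False
  then have "1 / (real s * p) - 1 \<le> 0"
    by simp
  moreover have "0 \<le> exp (- 2 * real s * p) - ((1 - p) / (1 + p)) ^ s"
    using assms one_minus_div_one_plus_pow_le_exp[of p s] by simp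
  ultimately have "(exp (- 2 * real s * p) - ((1 - p) / (1 + p)) ^ s) * (1 / (real s * p) - 1) \<le> 0"
    by (simp add: mult_nonneg_nonpos)
  also have "0 \<le> p / (1 - p) / 6"
    using assms by simp
  finally show ?thesis .
next
  case True
  define K where "K = 2 / 3 * real s * p ^ 3 / (1 - p\<^sup>2)"
  have "0 \<le> K"
    using assms by (simp add: K_def power_le_one)
  then have "exp (- 2 * real s * p) * K \<le> K"
    using assms by (intro mult_left_le_one_le) simp_all
  then have "exp (- 2 * real s * p) - ((1 - p) / (1 + p)) ^ s \<le> K"
    using assms exp_sub_one_minus_div_one_plus_pow_le[of p s] by (simp add: K_def)
  then have "(exp (- 2 * real s * p) - ((1 - p) / (1 + p)) ^ s) * (1 / (real s * p) - 1)
      \<le> K * (1 / (real s * p) - 1)"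
    using True assms by (intro mult_right_mono) simp_all
  also have "\<dots> \<le> p / (1 - p) / 6"
    unfolding K_def using cubic_correction_mult_le[OF assms True] .
  finally show ?thesis .
qed

lemma two_div_exp_1_add_sixth_le: "2 / exp 1 + 1 / 6 \<le> 2 / exp (3 / 4 :: real)"
proof -
  have "exp 1 \<le> (3 :: real)"
    by (rule exp_le)
  then have "2 / exp 1 + 1 / 6 \<le> 2 * (5 / 4) / (exp 1 :: real)"
    by (simp add: field_simps)
  also have "\<dots> \<le> 2 * exp (1 / 4) / exp 1"
    using exp_ge_add_one_self[of "1 / 4 :: real"] by (intro divide_right_mono) simp_all
  also have "\<dots> = 2 / exp (3 / 4)"
    by (simp add: field_simps flip: exp_add)
  finally show ?thesis .
qed

lemma h12_sym_le_g_fun_sym: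
  fixes p :: real
  assumes "0 < p" "p < 1" "s \<ge> 1"
  shows "(h12 s p + ((1 - p) / (1 + p)) ^ s * h12 s (- p)) / 2
    \<le> 1/2 * (g_fun (real s * p) + exp (- 2 * real s * p) * g_fun (- (real s * p)))
      + 1/2 * (1 + 2 / exp (3/4)) * (p / (1 - p))"
proof -
  define x where "x = real s * p"
  define r where "r = ((1 - p) / (1 + p)) ^ s"
  define P where "P = p / (1 - p)"
  have "P > 0" "x > 0"
    using assms by (simp_all add: P_def x_def)
  have "0 \<le> r * (p / (1 + p))"
    using assms by (simp add: r_def)
  moreover have "4 * (exp (- x) - (1 - p) ^ s) \<le> 2 / exp 1 * P"
  proof -
    have "exp (- x) - (1 - p) ^ s \<le> exp (- x) * (x * P / 2)"
      using assms exp_sub_one_minus_pow_le[of p s, folded x_def P_def] by simp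
    then have "4 * (exp (- x) - (1 - p) ^ s) \<le> 2 * (exp (- x) * (x + 0)) * P"
      by (simp add: algebra_simps)
    also have "\<dots> \<le> 2 * exp (0 - 1) * P"
      using exp_neg_mult_add_le[of x 0] \<open>P > 0\<close> by (intro mult_right_mono) simp_all
    finally show ?thesis
      by (simp add: exp_minus inverse_eq_divide)
  qed
  moreover have "(exp (- 2 * x) - r) * (1 / x - 1) \<le> P / 6"
    using exp_sub_one_minus_div_one_plus_pow_mult_le[OF assms] by (simp add: x_def r_def P_def mult.assoc)
  moreover have "2 / exp 1 * P + P / 6 \<le> 2 / exp (3 / 4) * P"
    using mult_right_mono[OF two_div_exp_1_add_sixth_le, of P] \<open>P > 0\<close> by (simp add: algebra_simps)
  moreover have "1/2 * (1 + 2 / exp (3/4)) * P = P / 2 + 2 / exp (3 / 4) * P / 2"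
    by (simp add: algebra_simps)
  ultimately have "(h12 s p + r * h12 s (- p)) / 2 - (g_fun x + exp (- 2 * x) * g_fun (- x)) / 2
      \<le> 1/2 * (1 + 2 / exp (3/4)) * P"
    unfolding h12_sym_sub_g_fun_sym[OF assms, folded x_def r_def P_def] by argo
  moreover have "exp (- 2 * x) = exp (- 2 * real s * p)"
    by (simp add: x_def mult.assoc)
  ultimately show ?thesis
    unfolding x_def r_def P_def by argo
qed

theorem lemma5:
  fixes p :: real and s :: nat
  assumes "0 < p" "p < 1" "s \<ge> 1"
  shows "g_fun (real s * p) \<le> h0 {1, 2} s p
       \<and> h0 {1, 2} s p \<le> g_fun (real s * p) + (1 + 1 / sqrt (exp 1)) * (p / (1 - p))
       \<and> h0 J_sym s p \<le> 1/2 * (g_fun (real s * p) + exp (- 2 * real s * p) * g_fun (- (real s * p)))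
           + 1/2 * (1 + 2 / exp (3/4)) * (p / (1 - p))
           + (4 * exp (3/2) - 1) / (6 * exp 3) * (p\<^sup>2 / (1 - p\<^sup>2)\<^sup>2)"
proof -
  have "0 \<le> 4 * exp (3 / 2) - (1 :: real)"
    using exp_ge_add_one_self[of "3 / 2 :: real"] by linarith
  then have "0 \<le> (4 * exp (3/2) - 1) / (6 * exp 3) * (p\<^sup>2 / (1 - p\<^sup>2)\<^sup>2)"
    by simp
  then show ?thesis
    unfolding h0_12_eq_h12[OF assms] h0_J_sym_eq_h12[OF assms]
    using g_fun_le_h12[OF assms] h12_le_g_fun_add[OF assms] h12_sym_le_g_fun_sym[OF assms]
    by linarith
qed

end
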